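(* Let $T(x)=\int_{\mathbb R}e^{-\sqrt2|x-y|}\mathrm{sech}^2(y)\,dy$, and for integers $k\ge1$ let $p_k=\int_{\mathbb R}\mathrm{sech}^k(x)\cos(x)\,dx$, $r_k=\int_{\mathbb R}\mathrm{sech}^k(x)T(x)\cos(x)\,dx$, $s_k=\int_{\mathbb R}\mathrm{sech}^k(x)T(x)\tanh(x)\sin(x)\,dx$. Then \begin{align*} r_3&=-r_1+s_1+\sqrt2\,p_1,\\ s_3&=\tfrac13s_1-r_1+\tfrac79\sqrt2\,p_1,\\ r_5&=-r_1+\tfrac23s_1+\tfrac{37}{36}\sqrt2\,p_1,\\ s_5&=-\tfrac25r_1+\tfrac1{15}s_1+\tfrac{13}{36}\sqrt2\,p_1,\\ r_7&=-\tfrac{13}{15}r_1+\tfrac{23}{45}s_1+\tfrac{83\sqrt2}{90}p_1 . \end{align*} *)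

theory Defs
  imports "HOL-Analysis.Analysis"
begin

definition sech :: "real \<Rightarrow> real" where
  "sech x = 1 / cosh x"

definition Tfun :: "real \<Rightarrow> real" where
  "Tfun x = (\<integral>y. exp (- sqrt 2 * \<bar>x - y\<bar>) * (sech y)^2 \<partial>lborel)"

definition p_int :: "nat \<Rightarrow> real" where
  "p_int k = (\<integral>x. (sech x)^k * cos x \<partial>lborel)"

definition r_int :: "nat \<Rightarrow> real" where
  "r_int k = (\<integral>x. (sech x)^k * Tfun x * cos x \<partial>lborel)"

definition s_int :: "nat \<Rightarrow> real" where
  "s_int k = (\<integral>x. (sech x)^k * Tfun x * tanh x * sin x \<partial>lborel)"

end

theory Submission
  imports Defs "HOL-Real_Asymp.Real_Asymp"
begin

text \<open>The kernel \<open>exp (- sqrt 2 * \<bar>x\<bar>) / (2 * sqrt 2)\<close> is the Green's function of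
  \<open>2 - d\<^sup>2/dx\<^sup>2\<close>. Hence, by Fubini and two integrations by parts, every \<open>C\<^sup>2\<close> function \<open>f\<close>
  which together with \<open>f'\<close> and \<open>f''\<close> decays like \<open>sech\<close> satisfies
  \<open>\<integral> (f'' - 2 f) T = - 2 sqrt 2 \<integral> sech\<^sup>2 f\<close>.
  For \<open>f = sech\<^sup>k cos\<close> and \<open>f = sech\<^sup>k tanh sin\<close> this gives two recurrences linking
  \<open>r\<^sub>k, s\<^sub>k, r\<^sub>k\<^sub>+\<^sub>2, s\<^sub>k\<^sub>+\<^sub>2\<close> to \<open>p\<^sub>k\<^sub>+\<^sub>2\<close> and \<open>q\<^sub>k\<^sub>+\<^sub>2 = \<integral> sech\<^sup>k\<^sup>+\<^sup>2 tanh sin\<close>.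
  Integrating the derivatives of \<open>sech\<^sup>k sin\<close> and \<open>sech\<^sup>k tanh cos\<close> expresses all \<open>p\<^sub>k\<close>
  and \<open>q\<^sub>k\<close> through \<open>p\<^sub>1\<close>, and the recurrences at \<open>k = 1, 3, 5\<close> form a triangular
  linear system whose solution is the theorem.\<close>

lemma sech_pos: "0 < sech x"
  unfolding sech_def by simp

lemma sech_le_one: "sech x \<le> 1"
  unfolding sech_def using cosh_real_ge_1[of x] by simp

lemma tanh_square_eq: "tanh x ^ 2 = 1 - sech x ^ 2"
proof -
  have "sinh x ^ 2 = cosh x ^ 2 - 1"
    using hyperbolic_pythagoras[of x] by simp
  then show ?thesis
    using cosh_real_pos[of x] unfolding sech_def tanh_def
    by (simp add: power_divide diff_divide_distrib)
qed

lemma abs_tanh_le_one: "\<bar>tanh x\<bar> \<le> (1::real)"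
  using tanh_real_bounds[of x] by (simp add: abs_le_iff)

lemma has_real_derivative_sech_power:
  "((\<lambda>x. sech x ^ k) has_real_derivative - real k * sech x ^ k * tanh x) (at x)"
proof -
  have "(sech has_real_derivative - sech x * tanh x) (at x)"
    unfolding sech_def tanh_def using cosh_real_pos[of x]
    by (auto intro!: derivative_eq_intros simp: field_simps power2_eq_square)
  from DERIV_power[OF this, of k] show ?thesis
    by (cases k) (simp_all add: algebra_simps)
qed

lemma has_real_derivative_sech_power_tanh:
  "((\<lambda>x. sech x ^ k * tanh x) has_real_derivative (real k + 1) * sech x ^ (k + 2) - real k * sech x ^ k) (at x)"
proof -
  have "((\<lambda>x. sech x ^ k * tanh x) has_real_derivative
      - real k * sech x ^ k * tanh x ^ 2 + sech x ^ k * (1 - tanh x ^ 2)) (at x)"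
    by (auto intro!: derivative_eq_intros has_real_derivative_sech_power[THEN DERIV_cong]
        simp: power2_eq_square)
  moreover have "- real k * sech x ^ k * tanh x ^ 2 + sech x ^ k * (1 - tanh x ^ 2) =
      (real k + 1) * sech x ^ (k + 2) - real k * sech x ^ k"
    unfolding tanh_square_eq power_add by (simp add: algebra_simps)
  ultimately show ?thesis
    by (rule DERIV_cong)
qed

lemma isCont_sech: "isCont sech x"
  using has_real_derivative_sech_power[of 1] DERIV_isCont by fastforce

lemma borel_measurable_sech [measurable]: "sech \<in> borel_measurable borel"
  by (intro borel_measurable_continuous_onI continuous_at_imp_continuous_on ballI isCont_sech)

lemma borel_measurable_tanh [measurable]: "(tanh :: real \<Rightarrow> real) \<in> borel_measurable borel"
  by (intro borel_measurable_continuous_onI continuous_intros) simp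

text \<open>The Gudermannian \<open>arctan \<circ> sinh\<close> is a bounded primitive of \<open>sech\<close>.\<close>

lemma integrable_sech: "integrable lborel sech"
proof -
  have gd: "((\<lambda>x. arctan (sinh x)) has_real_derivative sech x) (at x)" for x
  proof -
    have "1 + sinh x ^ 2 = cosh x ^ 2"
      using cosh_square_eq[of x] by simp
    then show ?thesis
      using cosh_real_pos[of x] unfolding sech_def
      by (auto intro!: derivative_eq_intros simp: field_simps power2_eq_square add_pos_nonneg)
  qed
  have "set_integrable lborel (einterval (-\<infinity>) \<infinity>) sech"
  proof (rule interval_integral_FTC_nonneg(1)[where F="\<lambda>x. arctan (sinh x)" and A="-(pi/2)" and B="pi/2"])
    show "(((\<lambda>x. arctan (sinh x)) \<circ> real_of_ereal) \<longlongrightarrow> - (pi / 2)) (at_right (- \<infinity>))"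
      unfolding ereal_tendsto_simps
      by (rule filterlim_compose[OF tendsto_arctan_at_bot sinh_real_at_bot])
    show "(((\<lambda>x. arctan (sinh x)) \<circ> real_of_ereal) \<longlongrightarrow> pi / 2) (at_left \<infinity>)"
      unfolding ereal_tendsto_simps
      by (rule filterlim_compose[OF tendsto_arctan_at_top sinh_real_at_top])
  qed (auto intro: gd isCont_sech less_imp_le[OF sech_pos])
  then show ?thesis by (simp add: set_integrable_def)
qed

lemma sech_tendsto_at_top: "(sech \<longlongrightarrow> 0) at_top"
  and sech_tendsto_at_bot: "(sech \<longlongrightarrow> 0) at_bot"
  unfolding sech_def[abs_def] divide_inverse
  by (simp_all add: tendsto_inverse_0_at_top cosh_real_at_top cosh_real_at_bot)

definition sech_bounded :: "(real \<Rightarrow> real) \<Rightarrow> bool" where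
  "sech_bounded f \<longleftrightarrow> (\<exists>C. \<forall>x. \<bar>f x\<bar> \<le> C * sech x)"

lemma sech_bounded_sech_power: "1 \<le> k \<Longrightarrow> sech_bounded (\<lambda>x. sech x ^ k)"
  unfolding sech_bounded_def
proof (intro exI allI)
  fix x assume "1 \<le> k"
  then have "sech x ^ k \<le> sech x ^ 1"
    using sech_pos[of x] sech_le_one[of x] by (intro power_decreasing) auto
  then show "\<bar>sech x ^ k\<bar> \<le> 1 * sech x"
    using sech_pos[of x] by simp
qed

lemma sech_bounded_cmult: "sech_bounded f \<Longrightarrow> sech_bounded (\<lambda>x. c * f x)"
  unfolding sech_bounded_def
proof (elim exE, intro exI allI)
  fix C x assume "\<forall>x. \<bar>f x\<bar> \<le> C * sech x"
  then show "\<bar>c * f x\<bar> \<le> (\<bar>c\<bar> * C) * sech x"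
    by (simp add: abs_mult mult.assoc mult_left_mono)
qed

lemma sech_bounded_mult_bounded:
  assumes "sech_bounded f" and "\<And>x. \<bar>u x\<bar> \<le> 1"
  shows "sech_bounded (\<lambda>x. f x * u x)"
proof -
  obtain C where C: "\<And>x. \<bar>f x\<bar> \<le> C * sech x"
    using assms(1) unfolding sech_bounded_def by blast
  have "\<bar>f x\<bar> * \<bar>u x\<bar> \<le> C * sech x * 1" for x
    by (rule mult_mono[OF C assms(2)]) (auto intro: order_trans[OF abs_ge_zero C])
  then have "\<bar>f x * u x\<bar> \<le> C * sech x" for x
    by (simp add: abs_mult)
  then show ?thesis
    unfolding sech_bounded_def by blast
qed

lemma sech_bounded_add:
  assumes "sech_bounded f" and "sech_bounded g"
  shows "sech_bounded (\<lambda>x. f x + g x)"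
proof -
  obtain C D where C: "\<And>x. \<bar>f x\<bar> \<le> C * sech x" and D: "\<And>x. \<bar>g x\<bar> \<le> D * sech x"
    using assms unfolding sech_bounded_def by blast
  have "\<bar>f x + g x\<bar> \<le> (C + D) * sech x" for x
    using abs_triangle_ineq[of "f x" "g x"] add_mono[OF C D, of x x] by (simp add: distrib_right)
  then show ?thesis
    unfolding sech_bounded_def by blast
qed

lemma sech_bounded_diff:
  "sech_bounded f \<Longrightarrow> sech_bounded g \<Longrightarrow> sech_bounded (\<lambda>x. f x - g x)"
  using sech_bounded_add[of f "\<lambda>x. -1 * g x"] sech_bounded_cmult[of g "-1"] by simp

lemmas sech_bounded_intros =
  sech_bounded_add sech_bounded_diff sech_bounded_cmult sech_bounded_mult_bounded
  sech_bounded_sech_power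

lemma sech_bounded_integrable:
  assumes "sech_bounded f" and "f \<in> borel_measurable borel"
  shows "integrable lborel f"
proof -
  obtain C where C: "\<And>x. \<bar>f x\<bar> \<le> C * sech x"
    using assms(1) unfolding sech_bounded_def by blast
  show ?thesis
  proof (rule Bochner_Integration.integrable_bound[where f = "\<lambda>x. C * sech x"])
    show "AE x in lborel. norm (f x) \<le> norm (C * sech x)"
      using C by (auto intro: order_trans[OF _ abs_ge_self])
  qed (use assms(2) integrable_sech in auto)
qed

lemma sech_bounded_tendsto_at_top: "sech_bounded f \<Longrightarrow> (f \<longlongrightarrow> 0) at_top"
  and sech_bounded_tendsto_at_bot: "sech_bounded f \<Longrightarrow> (f \<longlongrightarrow> 0) at_bot"
proof -
  assume "sech_bounded f"
  then obtain C where "\<forall>x. norm (f x) \<le> C * sech x"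
    unfolding sech_bounded_def by auto
  then have bound: "eventually (\<lambda>x. norm (f x) \<le> C * sech x) F" for F
    by (simp add: always_eventually)
  show "(f \<longlongrightarrow> 0) at_top"
    by (rule Lim_null_comparison[OF bound tendsto_mult_right_zero[OF sech_tendsto_at_top]])
  show "(f \<longlongrightarrow> 0) at_bot"
    by (rule Lim_null_comparison[OF bound tendsto_mult_right_zero[OF sech_tendsto_at_bot]])
qed

lemma integrable_sech_power: "1 \<le> k \<Longrightarrow> integrable lborel (\<lambda>x. sech x ^ k)"
  by (intro sech_bounded_integrable sech_bounded_sech_power) auto

lemma integrable_Tfun_integrand:
  "integrable lborel (\<lambda>y. exp (- sqrt 2 * \<bar>x - y\<bar>) * sech y ^ 2)"
proof (rule Bochner_Integration.integrable_bound[OF integrable_sech_power[of 2]])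
  show "AE y in lborel. norm (exp (- sqrt 2 * \<bar>x - y\<bar>) * sech y ^ 2) \<le> norm (sech y ^ 2)"
    by (auto intro!: mult_left_le_one_le)
qed simp_all

lemma borel_measurable_Tfun [measurable]: "Tfun \<in> borel_measurable borel"
proof -
  have "(\<lambda>x. \<integral>y. exp (- sqrt 2 * \<bar>x - y\<bar>) * sech y ^ 2 \<partial>lborel) \<in> borel_measurable lborel"
    by (rule lborel.borel_measurable_lebesgue_integral) simp
  then show ?thesis
    unfolding Tfun_def[abs_def] by simp
qed

lemma abs_Tfun_le: "\<bar>Tfun x\<bar> \<le> (\<integral>y. sech y ^ 2 \<partial>lborel)"
proof -
  have "\<bar>Tfun x\<bar> \<le> (\<integral>y. \<bar>exp (- sqrt 2 * \<bar>x - y\<bar>) * sech y ^ 2\<bar> \<partial>lborel)"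
    unfolding Tfun_def by (rule integral_abs_bound)
  also have "\<dots> \<le> (\<integral>y. sech y ^ 2 \<partial>lborel)"
    using integrable_Tfun_integrand integrable_sech_power[of 2]
    by (intro integral_mono) (auto simp: abs_mult intro!: mult_left_le_one_le)
  finally show ?thesis .
qed

lemma integrable_mult_Tfun:
  assumes "integrable lborel f"
  shows "integrable lborel (\<lambda>x. f x * Tfun x)"
proof (rule Bochner_Integration.integrable_bound)
  show "integrable lborel (\<lambda>x. (\<integral>y. sech y ^ 2 \<partial>lborel) * f x)"
    using assms by simp
  have "\<bar>f x * Tfun x\<bar> \<le> \<bar>f x\<bar> * \<bar>\<integral>y. sech y ^ 2 \<partial>lborel\<bar>" for x
    using mult_left_mono[OF order_trans[OF abs_Tfun_le abs_ge_self] abs_ge_zero]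
    by (simp add: abs_mult)
  then show "AE x in lborel. norm (f x * Tfun x) \<le> norm ((\<integral>y. sech y ^ 2 \<partial>lborel) * f x)"
    by (simp add: abs_mult mult.commute)
qed (use assms borel_measurable_integrable in auto)

lemma integral_mult_Tfun:
  assumes "integrable lborel f"
  shows "(\<integral>x. f x * Tfun x \<partial>lborel) =
    (\<integral>y. sech y ^ 2 * (\<integral>x. exp (- sqrt 2 * \<bar>x - y\<bar>) * f x \<partial>lborel) \<partial>lborel)"
proof -
  define F where "F x y = f x * (exp (- sqrt 2 * \<bar>x - y\<bar>) * sech y ^ 2)" for x y
  have [measurable]: "f \<in> borel_measurable borel"
    using assms borel_measurable_integrable by auto
  have "integrable (lborel \<Otimes>\<^sub>M lborel) (case_prod F)"
  proof (rule lborel_pair.Fubini_integrable)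
    have "(\<integral>y. norm (F x y) \<partial>lborel) = \<bar>f x\<bar> * Tfun x" for x
      unfolding Tfun_def F_def by (simp add: abs_mult)
    then show "integrable lborel (\<lambda>x. \<integral>y. norm (case_prod F (x, y)) \<partial>lborel)"
      using integrable_mult_Tfun[of "\<lambda>x. \<bar>f x\<bar>"] assms by simp
    show "AE x in lborel. integrable lborel (\<lambda>y. case_prod F (x, y))"
      unfolding F_def using integrable_Tfun_integrand by auto
  qed (unfold F_def, measurable)
  then have "(\<integral>x. (\<integral>y. F x y \<partial>lborel) \<partial>lborel) = (\<integral>y. (\<integral>x. F x y \<partial>lborel) \<partial>lborel)"
    by (rule lborel_pair.Fubini_integral[symmetric])
  moreover have "(\<integral>y. F x y \<partial>lborel) = f x * Tfun x" for x
    unfolding F_def Tfun_def by simp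
  moreover have "(\<integral>x. F x y \<partial>lborel) = sech y ^ 2 * (\<integral>x. exp (- sqrt 2 * \<bar>x - y\<bar>) * f x \<partial>lborel)" for y
  proof -
    have "(\<integral>x. F x y \<partial>lborel) = (\<integral>x. sech y ^ 2 * (exp (- sqrt 2 * \<bar>x - y\<bar>) * f x) \<partial>lborel)"
      unfolding F_def by (simp add: mult_ac)
    then show ?thesis
      by simp
  qed
  ultimately show ?thesis
    by simp
qed

lemma integral_eq_0_if_deriv_tendsto_0:
  fixes F f :: "real \<Rightarrow> real"
  assumes "\<And>x. (F has_real_derivative f x) (at x)" and "\<And>x. isCont f x"
    and "integrable lborel f" and "(F \<longlongrightarrow> 0) at_top" and "(F \<longlongrightarrow> 0) at_bot"
  shows "(\<integral>x. f x \<partial>lborel) = 0"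
proof -
  have "(LBINT x=-\<infinity>..\<infinity>. f x) = 0 - 0"
  proof (rule interval_integral_FTC_integrable)
    show "set_integrable lborel (einterval (-\<infinity>) \<infinity>) f"
      using assms(3) by (simp add: set_integrable_def)
  qed (use assms in \<open>auto simp: has_real_derivative_iff_has_vector_derivative[symmetric]
    ereal_tendsto_simps\<close>)
  then show ?thesis
    by (simp add: interval_lebesgue_integral_def set_lebesgue_integral_def)
qed

context
  fixes f f' f'' :: "real \<Rightarrow> real"
  assumes f_deriv: "\<And>x. (f has_real_derivative f' x) (at x)"
    and f'_deriv: "\<And>x. (f' has_real_derivative f'' x) (at x)"
    and f''_cont: "\<And>x. isCont f'' x"
begin

lemma interval_integral_green_kernel_right:
  fixes a :: real
  assumes "0 < a" and "(f \<longlongrightarrow> 0) at_top" and "(f' \<longlongrightarrow> 0) at_top"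
    and "integrable lborel (\<lambda>x. exp (- a * \<bar>x - y\<bar>) * (f'' x - a\<^sup>2 * f x))"
  shows "(LBINT x=ereal y..\<infinity>. exp (- a * \<bar>x - y\<bar>) * (f'' x - a\<^sup>2 * f x)) = - f' y - a * f y"
proof -
  define H where "H x = exp (- a * (x - y)) * (f' x + a * f x)" for x
  have H_deriv: "(H has_real_derivative exp (- a * (x - y)) * (f'' x - a\<^sup>2 * f x)) (at x)" for x
    unfolding H_def[abs_def]
    by (auto intro!: derivative_eq_intros f_deriv f'_deriv simp: algebra_simps power2_eq_square)
  have "(LBINT x=ereal y..\<infinity>. exp (- a * \<bar>x - y\<bar>) * (f'' x - a\<^sup>2 * f x)) = 0 - H y"
  proof (rule interval_integral_FTC_integrable)
    fix x assume "ereal y < ereal x"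
    then show "(H has_vector_derivative exp (- a * \<bar>x - y\<bar>) * (f'' x - a\<^sup>2 * f x)) (at x)"
      using H_deriv[of x] by (simp add: has_real_derivative_iff_has_vector_derivative)
  next
    show "set_integrable lborel (einterval (ereal y) \<infinity>) (\<lambda>x. exp (- a * \<bar>x - y\<bar>) * (f'' x - a\<^sup>2 * f x))"
      using assms(4) unfolding set_integrable_def by (rule integrable_mult_indicator[rotated]) simp
    show "((H \<circ> real_of_ereal) \<longlongrightarrow> H y) (at_right (ereal y))"
      unfolding ereal_tendsto_simps using H_deriv[THEN DERIV_isCont, of y]
      by (simp add: isCont_def filterlim_at_split)
    have "((\<lambda>x. exp (- a * (x - y))) \<longlongrightarrow> 0) at_top"
      using \<open>0 < a\<close> by real_asymp
    then have "(H \<longlongrightarrow> 0 * (0 + a * 0)) at_top"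
      unfolding H_def[abs_def] by (intro tendsto_intros assms(2,3))
    then show "((H \<circ> real_of_ereal) \<longlongrightarrow> 0) (at_left \<infinity>)"
      unfolding ereal_tendsto_simps by simp
  qed (simp, intro continuous_intros f''_cont f_deriv[THEN DERIV_isCont])
  then show ?thesis
    by (simp add: H_def)
qed

lemma interval_integral_green_kernel_left:
  fixes a :: real
  assumes "0 < a" and "(f \<longlongrightarrow> 0) at_bot" and "(f' \<longlongrightarrow> 0) at_bot"
    and "integrable lborel (\<lambda>x. exp (- a * \<bar>x - y\<bar>) * (f'' x - a\<^sup>2 * f x))"
  shows "(LBINT x=-\<infinity>..ereal y. exp (- a * \<bar>x - y\<bar>) * (f'' x - a\<^sup>2 * f x)) = f' y - a * f y"
proof -
  define H where "H x = exp (a * (x - y)) * (f' x - a * f x)" for x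
  have H_deriv: "(H has_real_derivative exp (a * (x - y)) * (f'' x - a\<^sup>2 * f x)) (at x)" for x
    unfolding H_def[abs_def]
    by (auto intro!: derivative_eq_intros f_deriv f'_deriv simp: algebra_simps power2_eq_square)
  have "(LBINT x=-\<infinity>..ereal y. exp (- a * \<bar>x - y\<bar>) * (f'' x - a\<^sup>2 * f x)) = H y - 0"
  proof (rule interval_integral_FTC_integrable)
    fix x assume "ereal x < ereal y"
    then show "(H has_vector_derivative exp (- a * \<bar>x - y\<bar>) * (f'' x - a\<^sup>2 * f x)) (at x)"
      using H_deriv[of x] by (simp add: has_real_derivative_iff_has_vector_derivative algebra_simps)
  next
    show "set_integrable lborel (einterval (-\<infinity>) (ereal y)) (\<lambda>x. exp (- a * \<bar>x - y\<bar>) * (f'' x - a\<^sup>2 * f x))"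
      using assms(4) unfolding set_integrable_def by (rule integrable_mult_indicator[rotated]) simp
    show "((H \<circ> real_of_ereal) \<longlongrightarrow> H y) (at_left (ereal y))"
      unfolding ereal_tendsto_simps using H_deriv[THEN DERIV_isCont, of y]
      by (simp add: isCont_def filterlim_at_split)
    have "((\<lambda>x. exp (a * (x - y))) \<longlongrightarrow> 0) at_bot"
      using \<open>0 < a\<close> by real_asymp
    then have "(H \<longlongrightarrow> 0 * (0 - a * 0)) at_bot"
      unfolding H_def[abs_def] by (intro tendsto_intros assms(2,3))
    then show "((H \<circ> real_of_ereal) \<longlongrightarrow> 0) (at_right (-\<infinity>))"
      unfolding ereal_tendsto_simps by simp
  qed (simp, intro continuous_intros f''_cont f_deriv[THEN DERIV_isCont])
  then show ?thesis
    by (simp add: H_def)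
qed

lemma integral_green_kernel:
  fixes a :: real
  assumes "0 < a"
    and "(f \<longlongrightarrow> 0) at_top" "(f \<longlongrightarrow> 0) at_bot" "(f' \<longlongrightarrow> 0) at_top" "(f' \<longlongrightarrow> 0) at_bot"
    and "integrable lborel (\<lambda>x. f'' x - a\<^sup>2 * f x)"
  shows "(\<integral>x. exp (- a * \<bar>x - y\<bar>) * (f'' x - a\<^sup>2 * f x) \<partial>lborel) = - 2 * a * f y"
proof -
  let ?g = "\<lambda>x. exp (- a * \<bar>x - y\<bar>) * (f'' x - a\<^sup>2 * f x)"
  have [measurable]: "(\<lambda>x. f'' x - a\<^sup>2 * f x) \<in> borel_measurable borel"
    using assms(6) borel_measurable_integrable by auto
  have g_int: "integrable lborel ?g"
  proof (rule Bochner_Integration.integrable_bound[OF assms(6)])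
    show "AE x in lborel. norm (?g x) \<le> norm (f'' x - a\<^sup>2 * f x)"
      using \<open>0 < a\<close> by (auto simp: abs_mult intro!: mult_left_le_one_le)
  qed simp
  have "(\<integral>x. ?g x \<partial>lborel) = (LBINT x=-\<infinity>..\<infinity>. ?g x)"
    by (simp add: interval_lebesgue_integral_def set_lebesgue_integral_def)
  also have "\<dots> = (LBINT x=-\<infinity>..ereal y. ?g x) + (LBINT x=ereal y..\<infinity>. ?g x)"
    using g_int by (intro interval_integral_sum[symmetric])
      (simp add: interval_lebesgue_integrable_def set_integrable_def integrable_mult_indicator)
  also have "\<dots> = (f' y - a * f y) + (- f' y - a * f y)"
    using interval_integral_green_kernel_left[OF assms(1,3,5) g_int]
      interval_integral_green_kernel_right[OF assms(1,2,4) g_int] by simp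
  finally show ?thesis
    by simp
qed

lemma integral_Tfun_green:
  assumes "(f \<longlongrightarrow> 0) at_top" "(f \<longlongrightarrow> 0) at_bot" "(f' \<longlongrightarrow> 0) at_top" "(f' \<longlongrightarrow> 0) at_bot"
    and "integrable lborel (\<lambda>x. f'' x - 2 * f x)"
  shows "(\<integral>x. (f'' x - 2 * f x) * Tfun x \<partial>lborel) = - 2 * sqrt 2 * (\<integral>x. sech x ^ 2 * f x \<partial>lborel)"
proof -
  have "(\<integral>x. (f'' x - 2 * f x) * Tfun x \<partial>lborel) =
      (\<integral>y. sech y ^ 2 * (\<integral>x. exp (- sqrt 2 * \<bar>x - y\<bar>) * (f'' x - 2 * f x) \<partial>lborel) \<partial>lborel)"
    using assms(5) by (rule integral_mult_Tfun)
  also have "\<dots> = (\<integral>y. sech y ^ 2 * (- 2 * sqrt 2 * f y) \<partial>lborel)"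
    using integral_green_kernel[of "sqrt 2"] assms by simp
  also have "\<dots> = (\<integral>y. (- 2 * sqrt 2) * (sech y ^ 2 * f y) \<partial>lborel)"
    by (simp add: mult_ac)
  also have "\<dots> = - 2 * sqrt 2 * (\<integral>x. sech x ^ 2 * f x \<partial>lborel)"
    by (rule integral_mult_right_zero)
  finally show ?thesis .
qed

lemma integral_Tfun_green_sech_bounded:
  assumes "sech_bounded f" "sech_bounded f'" "sech_bounded f''"
  shows "(\<integral>x. (f'' x - 2 * f x) * Tfun x \<partial>lborel) = - 2 * sqrt 2 * (\<integral>x. sech x ^ 2 * f x \<partial>lborel)"
proof (rule integral_Tfun_green)
  have [measurable]: "f \<in> borel_measurable borel" "f'' \<in> borel_measurable borel"
    using f_deriv[THEN DERIV_isCont] f''_cont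
    by (auto intro!: borel_measurable_continuous_onI continuous_at_imp_continuous_on)
  show "integrable lborel (\<lambda>x. f'' x - 2 * f x)"
    using assms by (intro sech_bounded_integrable sech_bounded_intros) auto
qed (use assms sech_bounded_tendsto_at_top sech_bounded_tendsto_at_bot in auto)

end

definition q_int :: "nat \<Rightarrow> real" where
  "q_int k = (\<integral>x. (sech x)^k * tanh x * sin x \<partial>lborel)"

lemma integrable_moment_integrands:
  assumes "1 \<le> k"
  shows "integrable lborel (\<lambda>x. sech x ^ k * cos x)"
    and "integrable lborel (\<lambda>x. sech x ^ k * tanh x * sin x)"
    and "integrable lborel (\<lambda>x. sech x ^ k * Tfun x * cos x)"
    and "integrable lborel (\<lambda>x. sech x ^ k * Tfun x * tanh x * sin x)"
proof -
  show cos: "integrable lborel (\<lambda>x. sech x ^ k * cos x)"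
    using assms by (intro sech_bounded_integrable sech_bounded_intros) auto
  show sin: "integrable lborel (\<lambda>x. sech x ^ k * tanh x * sin x)"
    using assms by (intro sech_bounded_integrable sech_bounded_intros) (auto simp: abs_tanh_le_one)
  show "integrable lborel (\<lambda>x. sech x ^ k * Tfun x * cos x)"
    using integrable_mult_Tfun[OF cos] by (simp add: mult_ac)
  show "integrable lborel (\<lambda>x. sech x ^ k * Tfun x * tanh x * sin x)"
    using integrable_mult_Tfun[OF sin] by (simp add: mult_ac)
qed

lemma p_int_eq_q_int:
  assumes "1 \<le> k"
  shows "p_int k = real k * q_int k"
proof -
  have "(\<integral>x. sech x ^ k * cos x - real k * (sech x ^ k * tanh x * sin x) \<partial>lborel) = 0"
  proof (rule integral_eq_0_if_deriv_tendsto_0)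
    show "((\<lambda>x. sech x ^ k * sin x) has_real_derivative
        sech x ^ k * cos x - real k * (sech x ^ k * tanh x * sin x)) (at x)" for x
      by (rule has_real_derivative_sech_power derivative_eq_intros refl)+ (simp add: algebra_simps)
    have "sech_bounded (\<lambda>x. sech x ^ k * sin x)"
      using assms by (intro sech_bounded_intros) auto
    then show "((\<lambda>x. sech x ^ k * sin x) \<longlongrightarrow> 0) at_top" "((\<lambda>x. sech x ^ k * sin x) \<longlongrightarrow> 0) at_bot"
      by (simp_all add: sech_bounded_tendsto_at_top sech_bounded_tendsto_at_bot)
    show "isCont (\<lambda>x. sech x ^ k * cos x - real k * (sech x ^ k * tanh x * sin x)) x" for x
      by (intro continuous_intros isCont_sech isCont_tanh cosh_real_nonzero)
  qed (use integrable_moment_integrands[OF assms] in simp)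
  then show ?thesis
    using integrable_moment_integrands[OF assms] by (simp add: p_int_def q_int_def)
qed

lemma p_int_add_2:
  assumes "1 \<le> k"
  shows "(real k + 1) * p_int (k + 2) = real k * p_int k + q_int k"
proof -
  have "(\<integral>x. (real k + 1) * (sech x ^ (k + 2) * cos x) - real k * (sech x ^ k * cos x)
      - sech x ^ k * tanh x * sin x \<partial>lborel) = 0"
  proof (rule integral_eq_0_if_deriv_tendsto_0)
    show "((\<lambda>x. sech x ^ k * tanh x * cos x) has_real_derivative
        (real k + 1) * (sech x ^ (k + 2) * cos x) - real k * (sech x ^ k * cos x)
          - sech x ^ k * tanh x * sin x) (at x)" for x
      by (rule has_real_derivative_sech_power_tanh derivative_eq_intros refl)+ (simp add: algebra_simps)
    have "sech_bounded (\<lambda>x. sech x ^ k * tanh x * cos x)"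
      using assms by (intro sech_bounded_intros) (auto simp: abs_tanh_le_one)
    then show "((\<lambda>x. sech x ^ k * tanh x * cos x) \<longlongrightarrow> 0) at_top"
        "((\<lambda>x. sech x ^ k * tanh x * cos x) \<longlongrightarrow> 0) at_bot"
      by (simp_all add: sech_bounded_tendsto_at_top sech_bounded_tendsto_at_bot)
    show "isCont (\<lambda>x. (real k + 1) * (sech x ^ (k + 2) * cos x) - real k * (sech x ^ k * cos x)
        - sech x ^ k * tanh x * sin x) x" for x
      by (intro continuous_intros isCont_sech isCont_tanh cosh_real_nonzero)
  qed (use integrable_moment_integrands[OF assms] integrable_moment_integrands[of "k + 2"] in simp)
  then show ?thesis
    using integrable_moment_integrands[OF assms] integrable_moment_integrands[of "k + 2"]
    by (simp add: p_int_def q_int_def)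
qed

lemma r_int_add_2:
  assumes "1 \<le> k"
  shows "(real k ^ 2 - 3) * r_int k - real k * (real k + 1) * r_int (k + 2) + 2 * real k * s_int k
    = - 2 * sqrt 2 * p_int (k + 2)"
proof -
  define f f' f'' where
    "f x = sech x ^ k * cos x" and
    "f' x = - real k * (sech x ^ k * tanh x) * cos x - sech x ^ k * sin x" and
    "f'' x = (real k ^ 2 - 1) * sech x ^ k * cos x - real k * (real k + 1) * sech x ^ (k + 2) * cos x
      + 2 * real k * (sech x ^ k * tanh x) * sin x" for x
  have "(\<integral>x. (f'' x - 2 * f x) * Tfun x \<partial>lborel) = - 2 * sqrt 2 * (\<integral>x. sech x ^ 2 * f x \<partial>lborel)"
  proof (rule integral_Tfun_green_sech_bounded)
    show "(f has_real_derivative f' x) (at x)" for x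
      unfolding f_def[abs_def] f'_def
      by (rule has_real_derivative_sech_power_tanh has_real_derivative_sech_power derivative_eq_intros refl)+
        (simp add: algebra_simps)
    show "(f' has_real_derivative f'' x) (at x)" for x
      unfolding f'_def[abs_def] f''_def
      by (rule has_real_derivative_sech_power_tanh has_real_derivative_sech_power derivative_eq_intros refl)+
        (simp add: algebra_simps power2_eq_square)
    show "isCont f'' x" for x
      unfolding f''_def[abs_def] by (intro continuous_intros isCont_sech isCont_tanh cosh_real_nonzero)
    show "sech_bounded f" "sech_bounded f'" "sech_bounded f''"
      unfolding f_def[abs_def] f'_def[abs_def] f''_def[abs_def] using assms
      by (intro sech_bounded_intros; simp add: abs_tanh_le_one)+
  qed
  moreover have "(\<integral>x. (f'' x - 2 * f x) * Tfun x \<partial>lborel) =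
      (\<integral>x. (real k ^ 2 - 3) * (sech x ^ k * Tfun x * cos x)
        - real k * (real k + 1) * (sech x ^ (k + 2) * Tfun x * cos x)
        + 2 * real k * (sech x ^ k * Tfun x * tanh x * sin x) \<partial>lborel)"
    unfolding f_def f''_def by (rule Bochner_Integration.integral_cong) (simp_all add: algebra_simps)
  moreover have "(\<integral>x. sech x ^ 2 * f x \<partial>lborel) = p_int (k + 2)"
    unfolding f_def p_int_def power_add by (simp add: mult_ac)
  ultimately show ?thesis
    using integrable_moment_integrands[OF assms] integrable_moment_integrands[of "k + 2"]
    by (simp add: r_int_def s_int_def)
qed

lemma s_int_add_2:
  assumes "1 \<le> k"
  shows "(real k ^ 2 - 3) * s_int k - (real k + 1) * (real k + 2) * s_int (k + 2)
    - 2 * real k * r_int k + 2 * (real k + 1) * r_int (k + 2) = - 2 * sqrt 2 * q_int (k + 2)"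
proof -
  define f f' f'' where
    "f x = sech x ^ k * tanh x * sin x" and
    "f' x = ((real k + 1) * sech x ^ (k + 2) - real k * sech x ^ k) * sin x + sech x ^ k * tanh x * cos x" and
    "f'' x = (real k ^ 2 - 1) * (sech x ^ k * tanh x) * sin x
      - (real k + 1) * (real k + 2) * (sech x ^ (k + 2) * tanh x) * sin x
      - 2 * real k * sech x ^ k * cos x + 2 * (real k + 1) * sech x ^ (k + 2) * cos x" for x
  have "(\<integral>x. (f'' x - 2 * f x) * Tfun x \<partial>lborel) = - 2 * sqrt 2 * (\<integral>x. sech x ^ 2 * f x \<partial>lborel)"
  proof (rule integral_Tfun_green_sech_bounded)
    show "(f has_real_derivative f' x) (at x)" for x
      unfolding f_def[abs_def] f'_def
      by (rule has_real_derivative_sech_power_tanh has_real_derivative_sech_power derivative_eq_intros refl)+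
        (simp add: algebra_simps)
    show "(f' has_real_derivative f'' x) (at x)" for x
      unfolding f'_def[abs_def] f''_def
      by (rule has_real_derivative_sech_power_tanh has_real_derivative_sech_power derivative_eq_intros refl)+
        (simp add: algebra_simps power2_eq_square)
    show "isCont f'' x" for x
      unfolding f''_def[abs_def] by (intro continuous_intros isCont_sech isCont_tanh cosh_real_nonzero)
    show "sech_bounded f" "sech_bounded f'" "sech_bounded f''"
      unfolding f_def[abs_def] f'_def[abs_def] f''_def[abs_def] using assms
      by (intro sech_bounded_intros; simp add: abs_tanh_le_one)+
  qed
  moreover have "(\<integral>x. (f'' x - 2 * f x) * Tfun x \<partial>lborel) =
      (\<integral>x. (real k ^ 2 - 3) * (sech x ^ k * Tfun x * tanh x * sin x)
        - (real k + 1) * (real k + 2) * (sech x ^ (k + 2) * Tfun x * tanh x * sin x)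
        - 2 * real k * (sech x ^ k * Tfun x * cos x)
        + 2 * (real k + 1) * (sech x ^ (k + 2) * Tfun x * cos x) \<partial>lborel)"
    unfolding f_def f''_def by (rule Bochner_Integration.integral_cong) (simp_all add: algebra_simps)
  moreover have "(\<integral>x. sech x ^ 2 * f x \<partial>lborel) = q_int (k + 2)"
    unfolding f_def q_int_def power_add by (simp add: mult_ac)
  ultimately show ?thesis
    using integrable_moment_integrands[OF assms] integrable_moment_integrands[of "k + 2"]
    by (simp add: r_int_def s_int_def)
qed

theorem lemma3p3:
  shows "r_int 3 = - r_int 1 + s_int 1 + sqrt 2 * p_int 1 \<and>
    s_int 3 = 1/3 * s_int 1 - r_int 1 + 7/9 * sqrt 2 * p_int 1 \<and>
    r_int 5 = - r_int 1 + 2/3 * s_int 1 + 37/36 * sqrt 2 * p_int 1 \<and>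
    s_int 5 = - 2/5 * r_int 1 + 1/15 * s_int 1 + 13/36 * sqrt 2 * p_int 1 \<and>
    r_int 7 = - 13/15 * r_int 1 + 23/45 * s_int 1 + 83 * sqrt 2 / 90 * p_int 1"
proof -
  \<comment> \<open>\<open>add_2_eq_Suc'\<close> would turn \<open>p_int (1 + 2)\<close> into \<open>p_int (Suc (Suc (Suc 0)))\<close>.\<close>
  have p: "p_int 3 = p_int 1" "p_int 5 = 5/6 * p_int 1" "p_int 7 = 13/18 * p_int 1"
    and q: "q_int 3 = 1/3 * p_int 1" "q_int 5 = 1/6 * p_int 1"
    using p_int_eq_q_int[of 1] p_int_eq_q_int[of 3] p_int_eq_q_int[of 5]
      p_int_add_2[of 1] p_int_add_2[of 3] p_int_add_2[of 5]
    by (simp_all del: add_2_eq_Suc')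
  have "- 2 * r_int 1 - 2 * r_int 3 + 2 * s_int 1 = - 2 * sqrt 2 * p_int 1"
    and "6 * r_int 3 - 12 * r_int 5 + 6 * s_int 3 = - 2 * sqrt 2 * (5/6 * p_int 1)"
    and "22 * r_int 5 - 30 * r_int 7 + 10 * s_int 5 = - 2 * sqrt 2 * (13/18 * p_int 1)"
    and "- 2 * s_int 1 - 6 * s_int 3 - 2 * r_int 1 + 4 * r_int 3 = - 2 * sqrt 2 * (1/3 * p_int 1)"
    and "6 * s_int 3 - 20 * s_int 5 - 6 * r_int 3 + 8 * r_int 5 = - 2 * sqrt 2 * (1/6 * p_int 1)"
    using r_int_add_2[of 1] r_int_add_2[of 3] r_int_add_2[of 5] s_int_add_2[of 1] s_int_add_2[of 3]
    by (simp_all add: p q del: add_2_eq_Suc')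
  then show ?thesis
    by (simp add: field_simps)
qed

end
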